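(* For $n\ge 2$, let $\mathsf{\Lambda}^2(\mathbb{C}^n)$ be the space of $n\times n$ complex skew-symmetric matrices and $\mu$ the structure tensor of the skew-symmetric matrix-vector product $\mathsf{\Lambda}^2(\mathbb{C}^n)\times\mathbb{C}^n\to\mathbb{C}^n$, $(A,x)\mapsto Ax$. Then $\operatorname{rank}(\mu)\le n^2-n-\lceil (n-1)/2\rceil+1$.
   Context: Structure tensor of a bilinear map $\beta:U\times V\to W$: the unique $\mu_\beta\in U^*\otimes V^*\otimes W$ with $\beta(u,v)=\mu_\beta(u,v,\cdot)$. Rank: least number of decomposable tensors summing to the tensor. *)

theory Defs
  imports "HOL-Analysis.Analysis"
begin

definition skew_mats :: "(complex^'n^'n) set" where
  "skew_mats = {A. transpose A = - A}"

definition mat_smul :: "complex \<Rightarrow> complex^'n^'m \<Rightarrow> complex^'n^'m" where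
  "mat_smul c A = (\<chi> i j. c * A $ i $ j)"

definition skew_functional :: "(complex^'n^'n \<Rightarrow> complex) \<Rightarrow> bool" where
  "skew_functional f \<longleftrightarrow>
     (\<forall>A\<in>skew_mats. \<forall>B\<in>skew_mats. f (A + B) = f A + f B) \<and>
     (\<forall>A\<in>skew_mats. \<forall>c. f (mat_smul c A) = c * f A)"

definition vec_functional :: "(complex^'n \<Rightarrow> complex) \<Rightarrow> bool" where
  "vec_functional g \<longleftrightarrow>
     (\<forall>x y. g (x + y) = g x + g y) \<and> (\<forall>c x. g (c *s x) = c * g x)"

text \<open>The structure tensor of (A,x) |-> A x, an element of U^* (x) V^* (x) W, is a sum of r
  decomposable tensors a_i (x) b_i (x) w_i iff A x = sum_i a_i(A) b_i(x) w_i for all A in U, x in V.\<close>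
definition skew_mv_decomp :: "nat \<Rightarrow> ('n::finite) itself \<Rightarrow> bool" where
  "skew_mv_decomp r _ \<longleftrightarrow>
     (\<exists>(a :: nat \<Rightarrow> complex^'n^'n \<Rightarrow> complex) (b :: nat \<Rightarrow> complex^'n \<Rightarrow> complex)
        (w :: nat \<Rightarrow> complex^'n).
        (\<forall>i<r. skew_functional (a i) \<and> vec_functional (b i)) \<and>
        (\<forall>A\<in>skew_mats. \<forall>x. A *v x = (\<Sum>i<r. (a i A * b i x) *s w i)))"

definition skew_mv_rank :: "('n::finite) itself \<Rightarrow> nat" where
  "skew_mv_rank t = (LEAST r. skew_mv_decomp r t)"

end

theory Submission
  imports Defs
begin

(* Order the indices by the injection to_nat into the naturals. For p < q the entry A_pq of a
   skew-symmetric A contributes A_pq (x_q e_p - x_p e_q) to A x, and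
     x_q e_p - x_p e_q = (x_p + x_q) (e_p - e_q) - x_p e_p + x_q e_q.
   The first summands give n(n-1)/2 decomposable tensors; by skew-symmetry the corrections,
   summed over all p < q, collapse to the n decomposable terms -(sum_q A_mq) x_m e_m. Hence the
   rank is at most n(n+1)/2, which is within the bound for n >= 3; for n = 2 the n(n-1) terms
   A_pq x_q e_p with p ~= q suffice. *)

lemma skew_mv_rank_le_card:
  fixes a :: "'i \<Rightarrow> complex^'n^'n \<Rightarrow> complex"
    and b :: "'i \<Rightarrow> complex^'n::finite \<Rightarrow> complex"
    and w :: "'i \<Rightarrow> complex^'n"
  assumes "finite I"
    and "\<And>i. i \<in> I \<Longrightarrow> skew_functional (a i) \<and> vec_functional (b i)"
    and "\<And>A x. A \<in> skew_mats \<Longrightarrow> A *v x = (\<Sum>i\<in>I. (a i A * b i x) *s w i)"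
  shows "skew_mv_rank TYPE('n) \<le> card I"
proof -
  obtain h where h: "bij_betw h {..<card I} I"
    using ex_bij_betw_nat_finite[OF \<open>finite I\<close>] by (auto simp: atLeast0LessThan)
  have "A *v x = (\<Sum>k<card I. (a (h k) A * b (h k) x) *s w (h k))" if "A \<in> skew_mats" for A x
    using assms(3)[OF that] sum.reindex_bij_betw[OF h, of "\<lambda>i. (a i A * b i x) *s w i"] by simp
  moreover have "skew_functional (a (h k)) \<and> vec_functional (b (h k))" if "k < card I" for k
    using assms(2) h that by (auto dest: bij_betwE)
  ultimately have "skew_mv_decomp (card I) TYPE('n)"
    unfolding skew_mv_decomp_def comp_def[symmetric]
    by (intro exI[of _ "a \<circ> h"] exI[of _ "b \<circ> h"] exI[of _ "w \<circ> h"]) simp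
  then show ?thesis
    unfolding skew_mv_rank_def by (rule Least_le)
qed

lemma skew_mv_rank_le_card_Plus:
  fixes a :: "'i \<Rightarrow> complex^'n^'n \<Rightarrow> complex"
    and b :: "'i \<Rightarrow> complex^'n::finite \<Rightarrow> complex"
    and w :: "'i \<Rightarrow> complex^'n"
    and a' :: "'j \<Rightarrow> complex^'n^'n \<Rightarrow> complex"
    and b' :: "'j \<Rightarrow> complex^'n \<Rightarrow> complex"
    and w' :: "'j \<Rightarrow> complex^'n"
  assumes "finite I" "finite J"
    and "\<And>i. i \<in> I \<Longrightarrow> skew_functional (a i) \<and> vec_functional (b i)"
    and "\<And>j. j \<in> J \<Longrightarrow> skew_functional (a' j) \<and> vec_functional (b' j)"
    and "\<And>A x. A \<in> skew_mats \<Longrightarrow>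
           A *v x = (\<Sum>i\<in>I. (a i A * b i x) *s w i) + (\<Sum>j\<in>J. (a' j A * b' j x) *s w' j)"
  shows "skew_mv_rank TYPE('n) \<le> card I + card J"
proof -
  have "skew_mv_rank TYPE('n) \<le> card (I <+> J)"
  proof (rule skew_mv_rank_le_card[where a = "case_sum a a'" and b = "case_sum b b'"
        and w = "case_sum w w'"])
    show "finite (I <+> J)" using assms(1,2) by simp
    show "skew_functional (case_sum a a' k) \<and> vec_functional (case_sum b b' k)"
      if "k \<in> I <+> J" for k
      using that assms(3,4) by (elim PlusE) simp_all
    show "A *v x = (\<Sum>k\<in>I <+> J. (case_sum a a' k A * case_sum b b' k x) *s case_sum w w' k)"
      if "A \<in> skew_mats" for A x
      using assms(5)[OF that] by (simp add: sum.Plus[OF assms(1,2)] comp_def)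
  qed
  with assms(1,2) show ?thesis by (simp add: card_Plus)
qed

lemma skew_mats_entry:
  assumes "A \<in> skew_mats"
  shows "A $ j $ i = - A $ i $ j"
proof -
  from assms have "transpose A $ i $ j = (- A) $ i $ j" by (simp add: skew_mats_def)
  then show ?thesis by (simp add: transpose_def)
qed

lemma skew_mats_diag: "A \<in> skew_mats \<Longrightarrow> A $ i $ i = 0"
  using skew_mats_entry[of A i i] by simp

lemma skew_functional_entry: "skew_functional (\<lambda>A. A $ i $ j)"
  by (simp add: skew_functional_def mat_smul_def)

lemma skew_functional_row_sum: "skew_functional (\<lambda>A. \<Sum>q\<in>UNIV. A $ m $ q)"
  by (simp add: skew_functional_def mat_smul_def sum.distrib sum_distrib_left)

lemma vec_functional_component: "vec_functional (\<lambda>x. x $ i)"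
  by (simp add: vec_functional_def)

lemma vec_functional_add_components: "vec_functional (\<lambda>x. x $ i + x $ j)"
  by (simp add: vec_functional_def algebra_simps)

lemma sum_case_prod_if_fst:
  assumes "finite S"
  shows "(\<Sum>(p, q)\<in>S. if p = m then f p q else 0) = (\<Sum>q | (m, q) \<in> S. f m q)"
proof -
  have "(\<Sum>(p, q)\<in>S. if p = m then f p q else 0) = (\<Sum>z\<in>{z\<in>S. fst z = m}. f m (snd z))"
    using assms by (subst sum.inter_filter) (auto intro: sum.cong)
  also have "{z\<in>S. fst z = m} = Pair m ` {q. (m, q) \<in> S}" by force
  finally show ?thesis by (simp add: sum.reindex inj_on_def)
qed

lemma sum_case_prod_if_snd:
  assumes "finite S"
  shows "(\<Sum>(p, q)\<in>S. if q = m then f p q else 0) = (\<Sum>p | (p, m) \<in> S. f p m)"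
proof -
  have "(\<Sum>(p, q)\<in>S. if q = m then f p q else 0) = (\<Sum>z\<in>{z\<in>S. snd z = m}. f (fst z) m)"
    using assms by (subst sum.inter_filter) (auto intro: sum.cong)
  also have "{z\<in>S. snd z = m} = (\<lambda>p. (p, m)) ` {p. (p, m) \<in> S}" by force
  finally show ?thesis by (simp add: sum.reindex inj_on_def)
qed

lemma to_nat_less_or_greater: "p \<noteq> q \<Longrightarrow> to_nat p < to_nat q \<or> to_nat q < to_nat p"
  by (metis injD inj_to_nat linorder_neqE_nat)

lemma sum_split_at_to_nat:
  fixes f :: "'n::finite \<Rightarrow> 'a::comm_monoid_add"
  shows "(\<Sum>q\<in>UNIV. f q) = (\<Sum>q | to_nat q < to_nat m. f q) + f m + (\<Sum>q | to_nat m < to_nat q. f q)"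
proof -
  let ?L = "{q. to_nat q < to_nat m}" and ?G = "{q. to_nat m < to_nat q}"
  have "UNIV = insert m (?L \<union> ?G)"
    using to_nat_less_or_greater[of _ m] by auto
  then have "sum f UNIV = sum f (insert m (?L \<union> ?G))" by (rule arg_cong)
  also have "\<dots> = f m + (sum f ?L + sum f ?G)"
    by (simp add: sum.union_disjoint disjoint_iff)
  finally show ?thesis by (simp add: add_ac)
qed

lemma card_offdiag_pairs: "card {(p, q :: 'n::finite). p \<noteq> q} = CARD('n) * CARD('n) - CARD('n)"
proof -
  have "{(p, q :: 'n). p \<noteq> q} = UNIV \<times> UNIV - range (\<lambda>p. (p, p))" by auto
  moreover have "card (range (\<lambda>p :: 'n. (p, p))) = CARD('n)"
    by (simp add: card_image inj_on_def)
  ultimately show ?thesis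
    by (simp add: card_Diff_subset card_cartesian_product)
qed

lemma card_to_nat_less_pairs:
  "2 * card {(p :: 'n::finite, q :: 'n). to_nat p < to_nat q} = CARD('n) * CARD('n) - CARD('n)"
proof -
  let ?S = "{(p :: 'n, q :: 'n). to_nat p < to_nat q}"
  have swap: "prod.swap ` ?S = {(p, q). to_nat q < to_nat p}" by force
  have "{(p, q :: 'n). p \<noteq> q} = ?S \<union> prod.swap ` ?S"
    unfolding swap using to_nat_less_or_greater by auto
  moreover have "?S \<inter> prod.swap ` ?S = {}" unfolding swap by auto
  moreover have "card (prod.swap ` ?S) = card ?S" by (simp add: card_image)
  ultimately show ?thesis
    using card_offdiag_pairs[where 'n = 'n] by (simp add: card_Un_disjoint)
qed

lemma skew_mult_vector_offdiag_expansion: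
  assumes "A \<in> skew_mats"
  shows "A *v x = (\<Sum>(p, q)\<in>{(p, q). p \<noteq> q}. (A $ p $ q * x $ q) *s axis p 1)"
proof (unfold vec_eq_iff, intro allI)
  fix m
  let ?O = "{(p, q). p \<noteq> q}"
  have "(\<Sum>(p, q)\<in>?O. (A $ p $ q * x $ q) *s axis p 1) $ m
      = (\<Sum>(p, q)\<in>?O. if p = m then A $ p $ q * x $ q else 0)"
    by (simp add: axis_def split_beta if_distrib[of "times _"] eq_commute[of m] cong: if_cong)
  also have "\<dots> = (\<Sum>q\<in>UNIV - {m}. A $ m $ q * x $ q)"
    by (subst sum_case_prod_if_fst) (simp_all add: set_diff_eq eq_commute)
  also have "\<dots> = (A *v x) $ m"
    using sum.remove[of UNIV m "\<lambda>q. A $ m $ q * x $ q"] skew_mats_diag[OF assms, of m]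
    by (simp add: matrix_vector_mult_def)
  finally show "(A *v x) $ m = (\<Sum>(p, q)\<in>?O. (A $ p $ q * x $ q) *s axis p 1) $ m" ..
qed

lemma skew_mv_rank_le_offdiag: "skew_mv_rank TYPE('n::finite) \<le> CARD('n) * CARD('n) - CARD('n)"
proof -
  have "skew_mv_rank TYPE('n) \<le> card {(p, q :: 'n). p \<noteq> q}"
    by (rule skew_mv_rank_le_card[where a = "\<lambda>(p, q) A. A $ p $ q" and b = "\<lambda>(p, q) x. x $ q"
          and w = "\<lambda>(p, q). axis p 1"])
      (auto simp: skew_functional_entry vec_functional_component skew_mult_vector_offdiag_expansion
        split_beta')
  then show ?thesis by (simp only: card_offdiag_pairs)
qed

lemma skew_mult_vector_pair_expansion:
  fixes A :: "complex^'n::finite^'n"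
  assumes "A \<in> skew_mats"
  shows "A *v x =
    (\<Sum>(p, q)\<in>{(p, q). to_nat p < to_nat q}. (A $ p $ q * (x $ p + x $ q)) *s (axis p 1 - axis q 1))
    + (\<Sum>m\<in>UNIV. ((\<Sum>q\<in>UNIV. A $ m $ q) * x $ m) *s (- axis m 1))"
proof (unfold vec_eq_iff, intro allI)
  fix m :: 'n
  let ?S = "{(p :: 'n, q :: 'n). to_nat p < to_nat q}"
  let ?P = "\<Sum>(p, q)\<in>?S. (A $ p $ q * (x $ p + x $ q)) *s (axis p 1 - axis q 1)"
  let ?D = "\<Sum>m\<in>UNIV. ((\<Sum>q\<in>UNIV. A $ m $ q) * x $ m) *s (- axis m 1)"
  let ?L = "{q :: 'n. to_nat q < to_nat m}" and ?G = "{q :: 'n. to_nat m < to_nat q}"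
  let ?g = "\<lambda>q. A $ m $ q * (x $ m + x $ q)"
  have below: "(\<Sum>p\<in>?L. A $ p $ m * (x $ p + x $ m)) = - (\<Sum>q\<in>?L. ?g q)"
    unfolding sum_negf[symmetric] using skew_mats_entry[OF assms, of _ m]
    by (simp add: algebra_simps)
  have "?P $ m = (\<Sum>(p, q)\<in>?S. if p = m then A $ p $ q * (x $ p + x $ q) else 0)
      - (\<Sum>(p, q)\<in>?S. if q = m then A $ p $ q * (x $ p + x $ q) else 0)"
    by (simp add: axis_def split_beta sum_subtractf[symmetric] right_diff_distrib
        if_distrib[of "times _"] eq_commute[of m] cong: if_cong)
  also have "\<dots> = (\<Sum>q\<in>?G. ?g q) - (\<Sum>p\<in>?L. A $ p $ m * (x $ p + x $ m))"
    by (simp add: sum_case_prod_if_fst sum_case_prod_if_snd)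
  also have "\<dots> = (\<Sum>q\<in>?G. ?g q) + (\<Sum>q\<in>?L. ?g q)"
    using below by simp
  also have "\<dots> = (\<Sum>q\<in>UNIV. ?g q)"
    using sum_split_at_to_nat[of ?g m] skew_mats_diag[OF assms, of m] by simp
  also have "\<dots> = (\<Sum>q\<in>UNIV. A $ m $ q) * x $ m + (\<Sum>q\<in>UNIV. A $ m $ q * x $ q)"
    by (simp add: distrib_left sum.distrib sum_distrib_right)
  finally have "?P $ m = (\<Sum>q\<in>UNIV. A $ m $ q) * x $ m + (A *v x) $ m"
    by (simp add: matrix_vector_mult_def)
  moreover have "?D $ m = - ((\<Sum>q\<in>UNIV. A $ m $ q) * x $ m)"
    by (simp add: axis_def if_distrib[of "times _"] sum_negf cong: if_cong)
  ultimately show "(A *v x) $ m = (?P + ?D) $ m"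
    by simp
qed

lemma skew_mv_rank_le_pairs:
  "skew_mv_rank TYPE('n::finite) \<le> card {(p :: 'n, q :: 'n). to_nat p < to_nat q} + CARD('n)"
  by (rule skew_mv_rank_le_card_Plus[where a = "\<lambda>(p, q) A. A $ p $ q"
        and b = "\<lambda>(p, q) x. x $ p + x $ q" and w = "\<lambda>(p, q). axis p 1 - axis q 1"
        and a' = "\<lambda>m A. \<Sum>q\<in>UNIV. A $ m $ q" and b' = "\<lambda>m x. x $ m" and w' = "\<lambda>m. - axis m 1"])
    (auto simp: skew_functional_entry skew_functional_row_sum vec_functional_component
      vec_functional_add_components skew_mult_vector_pair_expansion split_beta')

lemma skew_mv_rank_le_triangular: "2 * skew_mv_rank TYPE('n::finite) \<le> CARD('n) * (CARD('n) + 1)"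
proof -
  have "CARD('n) \<le> CARD('n) * CARD('n)" by simp
  then have "2 * skew_mv_rank TYPE('n) \<le> CARD('n) * CARD('n) + CARD('n)"
    using skew_mv_rank_le_pairs[where 'n = 'n] card_to_nat_less_pairs[where 'n = 'n] by linarith
  then show ?thesis by (simp add: distrib_left)
qed

lemma ceiling_half_pred: "\<lceil>(real n - 1) / 2\<rceil> = int (n div 2)"
  by (cases "even n") (auto elim!: evenE oddE simp: ceiling_eq_iff)

lemma triangular_le_quadratic_bound:
  assumes "3 \<le> n"
  shows "int n * (int n + 1) \<le> 2 * (int n ^ 2 - int n - int (n div 2) + 1)"
proof -
  consider "n = 3" | "4 \<le> n" using assms by linarith
  then show ?thesis
  proof cases
    case 2
    then have "4 * int n \<le> int n * int n" by (intro mult_right_mono) auto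
    moreover have "2 * int (n div 2) \<le> int n" by linarith
    ultimately show ?thesis by (simp add: power2_eq_square algebra_simps)
  qed simp
qed

theorem mainTheorem17:
  assumes "CARD('n::finite) \<ge> 2"
  shows "int (skew_mv_rank TYPE('n))
           \<le> int (CARD('n))^2 - int (CARD('n)) - \<lceil>(real (CARD('n)) - 1) / 2\<rceil> + 1"
proof -
  let ?n = "CARD('n)" and ?r = "skew_mv_rank TYPE('n)"
  have ceil: "\<lceil>(real ?n - 1) / 2\<rceil> = int (?n div 2)" by (rule ceiling_half_pred)
  consider "?n = 2" | "3 \<le> ?n" using assms by linarith
  then show ?thesis
  proof cases
    case 1
    then show ?thesis unfolding ceil using skew_mv_rank_le_offdiag[where 'n = 'n] by simp
  next
    case 2
    have "int (2 * ?r) \<le> int (?n * (?n + 1))"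
      using skew_mv_rank_le_triangular[where 'n = 'n] by (simp only: of_nat_le_iff)
    also have "\<dots> \<le> 2 * (int ?n ^ 2 - int ?n - int (?n div 2) + 1)"
      unfolding of_nat_mult of_nat_add of_nat_1 by (rule triangular_le_quadratic_bound[OF 2])
    finally show ?thesis unfolding ceil by simp
  qed
qed

end
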